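(* Let $R$ be an integral domain and $Q$ a quandle. Then: (1) The extended quandle ring $R^{\circ}[Q]$ contains zero-divisors. (2) If $Q$ contains a trivial subquandle with more than one element, then $R[Q]$ contains zero-divisors. (3) If $Q$ is inert, then $R[Q]$ contains zero-divisors. In particular, if $Q$ contains a finite subquandle with more than one element, then $R[Q]$ contains zero-divisors. (4) If $Q$ is not semi-latin, then $R[Q]$ contains zero-divisors.
   Context: A quandle is a non-empty set $Q$ with a binary operation $(x,y)\mapsto xy$ such that $xx=x$ for all $x$; for all $x,y$ there is a unique $z$ with $x=zy$; and $(xy)z=(xz)(yz)$ for all $x,y,z$. A subquandle is a subset closed under the operation which is a quandle with it. A quandle is trivial if $xy=x$ for all $x,y$. The quandle ring $R[Q]$ is the free $R$-module with basis $Q$, with multiplication $\big(\sum_i\alpha_i x_i\big)\big(\sum_j\beta_j x_j\big)=\sum_{i,j}\alpha_i\beta_j (x_ix_j)$ (in general non-associative). The extended quandle ring is $R^{\circ}[Q]=R[Q]\oplus Re$, where $e$ is a symbol not in $Q$ acting as a two-sided identity: $eu=u=ue$ for $u\in R[Q]$ and $ee=e$. A zero-divisor in a ring is a non-zero element $u$ for which there exists a non-zero $v$ with $uv=0$ or $vu=0$. A quandle $Q$ with more than one element is inert if there exist a finite subset $A=\{a_1,\dots,a_n\}\subseteq Q$ and two distinct elements $x,y\in Q$ such that $Ax=Ay$, where $Az=\{a_1z,\dots,a_nz\}$. A quandle is semi-latin if for each $x\in Q$ the map $L_x:Q\to Q$, $L_x(y)=xy$, is injective. *)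

theory Defs
  imports Main
begin

definition quandle :: "'a set \<Rightarrow> ('a \<Rightarrow> 'a \<Rightarrow> 'a) \<Rightarrow> bool" where
  "quandle Q op \<longleftrightarrow> Q \<noteq> {}
     \<and> (\<forall>x\<in>Q. \<forall>y\<in>Q. op x y \<in> Q)
     \<and> (\<forall>x\<in>Q. op x x = x)
     \<and> (\<forall>x\<in>Q. \<forall>y\<in>Q. \<exists>!z. z \<in> Q \<and> x = op z y)
     \<and> (\<forall>x\<in>Q. \<forall>y\<in>Q. \<forall>z\<in>Q. op (op x y) z = op (op x z) (op y z))"

definition subquandle :: "'a set \<Rightarrow> 'a set \<Rightarrow> ('a \<Rightarrow> 'a \<Rightarrow> 'a) \<Rightarrow> bool" where
  "subquandle S Q op \<longleftrightarrow> S \<subseteq> Q \<and> quandle S op"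

definition trivial_quandle :: "'a set \<Rightarrow> ('a \<Rightarrow> 'a \<Rightarrow> 'a) \<Rightarrow> bool" where
  "trivial_quandle S op \<longleftrightarrow> (\<forall>x\<in>S. \<forall>y\<in>S. op x y = x)"

definition inert :: "'a set \<Rightarrow> ('a \<Rightarrow> 'a \<Rightarrow> 'a) \<Rightarrow> bool" where
  "inert Q op \<longleftrightarrow> (\<exists>x\<in>Q. \<exists>y\<in>Q. x \<noteq> y)
     \<and> (\<exists>A x y. finite A \<and> A \<noteq> {} \<and> A \<subseteq> Q \<and> x \<in> Q \<and> y \<in> Q \<and> x \<noteq> y
            \<and> (\<lambda>a. op a x) ` A = (\<lambda>a. op a y) ` A)"

definition semi_latin :: "'a set \<Rightarrow> ('a \<Rightarrow> 'a \<Rightarrow> 'a) \<Rightarrow> bool" where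
  "semi_latin Q op \<longleftrightarrow> (\<forall>x\<in>Q. inj_on (op x) Q)"

definition qr_elems :: "'a set \<Rightarrow> ('a \<Rightarrow> 'r::zero) set" where
  "qr_elems Q = {u. finite {x. u x \<noteq> 0} \<and> (\<forall>x. u x \<noteq> 0 \<longrightarrow> x \<in> Q)}"

definition qr_mult :: "('a \<Rightarrow> 'a \<Rightarrow> 'a) \<Rightarrow> ('a \<Rightarrow> 'r::comm_ring_1) \<Rightarrow> ('a \<Rightarrow> 'r) \<Rightarrow> ('a \<Rightarrow> 'r)" where
  "qr_mult op u v = (\<lambda>z. \<Sum>p\<in>{(x, y). u x \<noteq> 0 \<and> v y \<noteq> 0 \<and> op x y = z}. u (fst p) * v (snd p))"

definition qr_zero_divisor :: "'a set \<Rightarrow> ('a \<Rightarrow> 'a \<Rightarrow> 'a) \<Rightarrow> ('a \<Rightarrow> 'r::comm_ring_1) \<Rightarrow> bool" where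
  "qr_zero_divisor Q op u \<longleftrightarrow> u \<in> qr_elems Q \<and> u \<noteq> (\<lambda>_. 0)
     \<and> (\<exists>v \<in> qr_elems Q. v \<noteq> (\<lambda>_. 0) \<and> (qr_mult op u v = (\<lambda>_. 0) \<or> qr_mult op v u = (\<lambda>_. 0)))"

text \<open>Extended quandle ring R[Q] \<oplus> R e: pairs (u, c) standing for u + c e.\<close>
definition eqr_elems :: "'a set \<Rightarrow> (('a \<Rightarrow> 'r::zero) \<times> 'r) set" where
  "eqr_elems Q = qr_elems Q \<times> UNIV"

definition eqr_mult :: "('a \<Rightarrow> 'a \<Rightarrow> 'a) \<Rightarrow> ('a \<Rightarrow> 'r::comm_ring_1) \<times> 'r \<Rightarrow> ('a \<Rightarrow> 'r) \<times> 'r \<Rightarrow> ('a \<Rightarrow> 'r) \<times> 'r" where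
  "eqr_mult op p q = (case p of (u, c) \<Rightarrow> case q of (v, d) \<Rightarrow>
     (\<lambda>z. qr_mult op u v z + c * v z + d * u z, c * d))"

definition eqr_zero_divisor :: "'a set \<Rightarrow> ('a \<Rightarrow> 'a \<Rightarrow> 'a) \<Rightarrow> ('a \<Rightarrow> 'r::comm_ring_1) \<times> 'r \<Rightarrow> bool" where
  "eqr_zero_divisor Q op p \<longleftrightarrow> p \<in> eqr_elems Q \<and> p \<noteq> (\<lambda>_. 0, 0)
     \<and> (\<exists>q \<in> eqr_elems Q. q \<noteq> (\<lambda>_. 0, 0) \<and> (eqr_mult op p q = (\<lambda>_. 0, 0) \<or> eqr_mult op q p = (\<lambda>_. 0, 0)))"

end

theory Submission
  imports Defs
begin

text \<open>
  Write \<open>\<Sigma>A\<close> (\<open>qr_sum_set A\<close>) for the sum of the elements of a finite set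
  \<open>A \<subseteq> Q\<close> in \<open>R[Q]\<close>.
  Since right translations of a quandle are injective, \<open>(\<Sigma>A) z\<close> is the sum of the
  elements of \<open>Az\<close>, so \<open>Ax = Ay\<close> gives \<open>(\<Sigma>A)(x - y) = 0\<close>: inert quandles have
  zero-divisors. A trivial subquandle \<open>{x, y}\<close>, a finite subquandle (on which right
  translations are bijections) and a pair \<open>zy = zy'\<close> with \<open>y \<noteq> y'\<close> are all witnesses of
  inertness. In \<open>R\<^sup>\<circ>[Q]\<close>, idempotency \<open>xx = x\<close> gives \<open>(x - e) x = 0\<close>.
  None of this uses that \<open>R\<close> is a domain: \<open>1 \<noteq> 0\<close> suffices.
\<close>

lemma quandle_closed: "quandle Q op \<Longrightarrow> x \<in> Q \<Longrightarrow> y \<in> Q \<Longrightarrow> op x y \<in> Q"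
  by (simp add: quandle_def)

lemma quandle_idem: "quandle Q op \<Longrightarrow> x \<in> Q \<Longrightarrow> op x x = x"
  by (simp add: quandle_def)

lemma quandle_nonempty: "quandle Q op \<Longrightarrow> Q \<noteq> {}"
  by (simp add: quandle_def)

lemma quandle_right_div:
  "quandle Q op \<Longrightarrow> x \<in> Q \<Longrightarrow> y \<in> Q \<Longrightarrow> \<exists>!z. z \<in> Q \<and> x = op z y"
  by (simp add: quandle_def)

lemma quandle_inj_on_right_translation:
  assumes "quandle Q op" "x \<in> Q"
  shows "inj_on (\<lambda>a. op a x) Q"
proof (rule inj_onI)
  fix a b assume "a \<in> Q" "b \<in> Q" "op a x = op b x"
  moreover have "\<exists>!z. z \<in> Q \<and> op a x = op z x"
    using assms \<open>a \<in> Q\<close> by (simp add: quandle_right_div quandle_closed)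
  ultimately show "a = b" by blast
qed

lemma quandle_right_translation_image:
  assumes "quandle Q op" "x \<in> Q"
  shows "(\<lambda>a. op a x) ` Q = Q"
proof
  show "(\<lambda>a. op a x) ` Q \<subseteq> Q" using assms by (auto simp: quandle_closed)
  show "Q \<subseteq> (\<lambda>a. op a x) ` Q"
    using quandle_right_div[OF assms(1) _ assms(2)] by blast
qed

lemma inert_if_trivial_subquandle:
  assumes "S \<subseteq> Q" "trivial_quandle S op" "x \<in> S" "y \<in> S" "x \<noteq> y"
  shows "inert Q op"
proof -
  have "(\<lambda>a. op a x) ` {x, y} = (\<lambda>a. op a y) ` {x, y}"
    using assms(2-4) unfolding trivial_quandle_def by auto
  moreover have "finite {x, y}" "{x, y} \<subseteq> Q" using assms(1,3,4) by auto
  ultimately show ?thesis unfolding inert_def using assms by blast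
qed

lemma inert_if_finite_subquandle:
  assumes "subquandle S Q op" "finite S" "x \<in> S" "y \<in> S" "x \<noteq> y"
  shows "inert Q op"
proof -
  have "quandle S op" "S \<subseteq> Q" using assms(1) unfolding subquandle_def by auto
  then have "(\<lambda>a. op a x) ` S = (\<lambda>a. op a y) ` S"
    using assms(3,4) by (simp add: quandle_right_translation_image)
  then show ?thesis unfolding inert_def using assms \<open>S \<subseteq> Q\<close> by blast
qed

lemma inert_if_not_semi_latin:
  assumes "\<not> semi_latin Q op"
  shows "inert Q op"
proof -
  obtain z x y where "z \<in> Q" "x \<in> Q" "y \<in> Q" "x \<noteq> y" "op z x = op z y"
    using assms unfolding semi_latin_def inj_on_def by blast
  then show ?thesis unfolding inert_def
    by (intro conjI exI[of _ "{z}"]) auto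
qed

lemma card_fibre_inj_on:
  assumes "inj_on f A"
  shows "card {a \<in> A. f a = z} = (if z \<in> f ` A then 1 else 0)"
proof (cases "z \<in> f ` A")
  case True
  then obtain a0 where "a0 \<in> A" "z = f a0" by blast
  with assms have "{a \<in> A. f a = z} = {a0}" by (auto dest: inj_onD)
  then show ?thesis using True by simp
next
  case False
  then have no_fibre: "{a \<in> A. f a = z} = {}" by blast
  show ?thesis unfolding no_fibre using False by simp
qed

definition qr_sum_set :: "'a set \<Rightarrow> 'a \<Rightarrow> 'r::zero_neq_one" where
  "qr_sum_set A z = (if z \<in> A then 1 else 0)"

lemma qr_sum_set_eq_0_iff: "qr_sum_set A z = 0 \<longleftrightarrow> z \<notin> A"
  by (simp add: qr_sum_set_def)

lemma qr_elems_qr_sum_set: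
  "finite A \<Longrightarrow> A \<subseteq> Q \<Longrightarrow> qr_sum_set A \<in> qr_elems Q"
  unfolding qr_elems_def by (auto simp: qr_sum_set_eq_0_iff intro: finite_subset)

lemma qr_elems_diff:
  assumes "u \<in> qr_elems Q" "v \<in> qr_elems Q"
  shows "u - v \<in> (qr_elems Q :: ('a \<Rightarrow> 'r::ab_group_add) set)"
proof -
  have "{x. (u - v) x \<noteq> 0} \<subseteq> {x. u x \<noteq> 0} \<union> {x. v x \<noteq> 0}" by auto
  then show ?thesis using assms unfolding qr_elems_def by (auto intro: finite_subset)
qed

lemma qr_sum_set_nonzero: "A \<noteq> {} \<Longrightarrow> qr_sum_set A \<noteq> (\<lambda>_. 0 :: 'r::zero_neq_one)"
  by (metis ex_in_conv qr_sum_set_eq_0_iff)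

lemma qr_sum_set_singleton_diff_nonzero:
  assumes "x \<noteq> y"
  shows "qr_sum_set {x} - qr_sum_set {y} \<noteq> (\<lambda>_. 0 :: 'r::ring_1)"
proof
  assume "qr_sum_set {x} - qr_sum_set {y} = (\<lambda>_. 0 :: 'r)"
  then have "qr_sum_set {x} x - qr_sum_set {y} x = (0 :: 'r)" by (metis fun_diff_def)
  with assms show False by (simp add: qr_sum_set_def)
qed

lemma qr_mult_qr_sum_set_singleton_diff:
  assumes "finite A" "x \<noteq> y"
  shows "qr_mult op (qr_sum_set A) (qr_sum_set {x} - qr_sum_set {y}) z
    = of_nat (card {a \<in> A. op a x = z}) - (of_nat (card {a \<in> A. op a y = z}) :: 'r::comm_ring_1)"
proof -
  let ?u = "qr_sum_set A :: 'a \<Rightarrow> 'r" and ?v = "qr_sum_set {x} - qr_sum_set {y} :: 'a \<Rightarrow> 'r"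
  let ?Bx = "{a \<in> A. op a x = z}" and ?By = "{a \<in> A. op a y = z}"
  let ?f = "\<lambda>p. ?u (fst p) * ?v (snd p)"
  have supp: "{(a, w). ?u a \<noteq> 0 \<and> ?v w \<noteq> 0 \<and> op a w = z}
      = (\<lambda>a. (a, x)) ` ?Bx \<union> (\<lambda>a. (a, y)) ` ?By"
    using assms(2) by (auto simp: qr_sum_set_def)
  have "qr_mult op ?u ?v z = sum ?f ((\<lambda>a. (a, x)) ` ?Bx) + sum ?f ((\<lambda>a. (a, y)) ` ?By)"
    unfolding qr_mult_def supp using assms by (intro sum.union_disjoint) auto
  also have "\<dots> = (\<Sum>a\<in>?Bx. 1) + (\<Sum>a\<in>?By. - 1)"
    using assms(2) by (simp add: sum.reindex inj_on_def qr_sum_set_def)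
  finally show ?thesis by (simp add: sum_negf)
qed

lemma qr_zero_divisor_if_inert:
  assumes q: "quandle Q op" and "inert Q op"
  shows "\<exists>u :: 'a \<Rightarrow> 'r::comm_ring_1. qr_zero_divisor Q op u"
proof -
  obtain A x y where A: "finite A" "A \<noteq> {}" "A \<subseteq> Q" "x \<in> Q" "y \<in> Q" "x \<noteq> y"
    and translates: "(\<lambda>a. op a x) ` A = (\<lambda>a. op a y) ` A"
    using assms(2) unfolding inert_def by blast
  have "inj_on (\<lambda>a. op a w) A" if "w \<in> Q" for w
    using quandle_inj_on_right_translation[OF q that] A(3) by (rule inj_on_subset)
  then have "card {a \<in> A. op a x = z} = card {a \<in> A. op a y = z}" for z
    using A(4,5) translates by (simp add: card_fibre_inj_on)
  then have "qr_mult op (qr_sum_set A) (qr_sum_set {x} - qr_sum_set {y}) = (\<lambda>_. 0 :: 'r)"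
    using A by (simp add: fun_eq_iff qr_mult_qr_sum_set_singleton_diff)
  moreover have "qr_sum_set {x} - qr_sum_set {y} \<in> (qr_elems Q :: ('a \<Rightarrow> 'r) set)"
    using A by (intro qr_elems_diff qr_elems_qr_sum_set) auto
  ultimately have "qr_zero_divisor Q op (qr_sum_set A :: 'a \<Rightarrow> 'r)"
    unfolding qr_zero_divisor_def using A
    by (metis qr_elems_qr_sum_set qr_sum_set_nonzero qr_sum_set_singleton_diff_nonzero)
  then show ?thesis by blast
qed

lemma qr_mult_qr_sum_set_idem:
  assumes "op x x = x"
  shows "qr_mult op (qr_sum_set {x}) (qr_sum_set {x}) = (qr_sum_set {x} :: 'a \<Rightarrow> 'r::comm_ring_1)"
proof
  fix z
  have "{(a, b). qr_sum_set {x} a \<noteq> (0::'r) \<and> qr_sum_set {x} b \<noteq> (0::'r) \<and> op a b = z}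
      = (if z = x then {(x, x)} else {})"
    using assms by (auto simp: qr_sum_set_def)
  then show "qr_mult op (qr_sum_set {x}) (qr_sum_set {x}) z = (qr_sum_set {x} z :: 'r)"
    unfolding qr_mult_def by (simp add: qr_sum_set_def)
qed

lemma eqr_zero_divisor_exists:
  assumes q: "quandle Q op"
  shows "\<exists>p :: ('a \<Rightarrow> 'r::comm_ring_1) \<times> 'r. eqr_zero_divisor Q op p"
proof -
  obtain x where x: "x \<in> Q" using quandle_nonempty[OF q] by blast
  let ?x = "qr_sum_set {x} :: 'a \<Rightarrow> 'r"
  have "qr_mult op ?x ?x = ?x"
    using quandle_idem[OF q x] by (rule qr_mult_qr_sum_set_idem)
  then have "eqr_mult op (?x, -1) (?x, 0) = (\<lambda>_. 0, 0)"
    unfolding eqr_mult_def by auto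
  moreover have "(?x, c) \<in> eqr_elems Q" for c
    unfolding eqr_elems_def using x by (simp add: qr_elems_qr_sum_set)
  ultimately have "eqr_zero_divisor Q op (?x, -1)"
    unfolding eqr_zero_divisor_def using qr_sum_set_nonzero[of "{x}"] by auto
  then show ?thesis by blast
qed

theorem proposition3p1:
  fixes Q :: "'a set" and op :: "'a \<Rightarrow> 'a \<Rightarrow> 'a"
  assumes "quandle Q op"
  shows "(\<exists>p :: ('a \<Rightarrow> 'r::idom) \<times> 'r. eqr_zero_divisor Q op p)
    \<and> ((\<exists>S. subquandle S Q op \<and> trivial_quandle S op \<and> (\<exists>x\<in>S. \<exists>y\<in>S. x \<noteq> y))
         \<longrightarrow> (\<exists>u :: 'a \<Rightarrow> 'r. qr_zero_divisor Q op u))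
    \<and> (inert Q op \<longrightarrow> (\<exists>u :: 'a \<Rightarrow> 'r. qr_zero_divisor Q op u))
    \<and> ((\<exists>S. subquandle S Q op \<and> finite S \<and> (\<exists>x\<in>S. \<exists>y\<in>S. x \<noteq> y))
         \<longrightarrow> (\<exists>u :: 'a \<Rightarrow> 'r. qr_zero_divisor Q op u))
    \<and> (\<not> semi_latin Q op \<longrightarrow> (\<exists>u :: 'a \<Rightarrow> 'r. qr_zero_divisor Q op u))"
proof (intro conjI impI)
  show "\<exists>p :: ('a \<Rightarrow> 'r) \<times> 'r. eqr_zero_divisor Q op p"
    using assms by (rule eqr_zero_divisor_exists)
  show "\<exists>u :: 'a \<Rightarrow> 'r. qr_zero_divisor Q op u" if "inert Q op"
    using assms that by (rule qr_zero_divisor_if_inert)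
next
  assume "\<exists>S. subquandle S Q op \<and> trivial_quandle S op \<and> (\<exists>x\<in>S. \<exists>y\<in>S. x \<noteq> y)"
  then obtain S x y where "S \<subseteq> Q" "trivial_quandle S op" "x \<in> S" "y \<in> S" "x \<noteq> y"
    unfolding subquandle_def by blast
  then show "\<exists>u :: 'a \<Rightarrow> 'r. qr_zero_divisor Q op u"
    using assms by (blast intro: qr_zero_divisor_if_inert inert_if_trivial_subquandle)
next
  assume "\<exists>S. subquandle S Q op \<and> finite S \<and> (\<exists>x\<in>S. \<exists>y\<in>S. x \<noteq> y)"
  then obtain S x y where "subquandle S Q op" "finite S" "x \<in> S" "y \<in> S" "x \<noteq> y"
    by blast
  then show "\<exists>u :: 'a \<Rightarrow> 'r. qr_zero_divisor Q op u"
    using assms by (blast intro: qr_zero_divisor_if_inert inert_if_finite_subquandle)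
next
  assume "\<not> semi_latin Q op"
  then show "\<exists>u :: 'a \<Rightarrow> 'r. qr_zero_divisor Q op u"
    using assms by (blast intro: qr_zero_divisor_if_inert inert_if_not_semi_latin)
qed

end
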